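(* Let $G$ be a finite simple graph on $[d]$. Then the Hilbert polynomial of $R[G]/K_G$ is the constant $2^d$; that is, $H(R[G]/K_G,k)=2^d$ for all sufficiently large $k$.
   Context: A stable set of $G$ is a subset of $[d]$ with no edge of $G$ (including $\emptyset$ and singletons); $S(G)$ is the set of stable sets; $R[G]=\mathbb{K}[x_S : S\in S(G)]$ over a field $\mathbb{K}$, all variables of degree $1$. $J_G$ is the ideal generated by all $x_{S_1}x_{S_2}-x_{S_3}x_{S_4}$ with $S_i\in S(G)$, $S_1\cap S_2=S_3\cap S_4=\emptyset$, $S_1\cup S_2=S_3\cup S_4$; $M_G=\langle x_Sx_T : S,T\in S(G),\ S\cap T\neq\emptyset\rangle$; $K_G=J_G+M_G$. $H(R[G]/K_G,k)=\dim_{\mathbb{K}}$ of the degree-$k$ part of $R[G]/K_G$; the Hilbert polynomial is the unique polynomial $P\in\mathbb{Q}[k]$ with $H(R[G]/K_G,k)=P(k)$ for all large $k$. *)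

theory Defs
  imports Complex_Main "HOL-Library.Poly_Mapping"
begin

definition simple_graph :: "nat \<Rightarrow> nat set set \<Rightarrow> bool" where
  "simple_graph d E \<longleftrightarrow> (\<forall>e\<in>E. e \<subseteq> {1..d} \<and> card e = 2)"

definition stable_sets :: "nat \<Rightarrow> nat set set \<Rightarrow> nat set set" where
  "stable_sets d E = {S. S \<subseteq> {1..d} \<and> (\<forall>e\<in>E. \<not> e \<subseteq> S)}"

text \<open>Monomials are finitely supported exponent vectors indexed by sets of vertices;
  polynomials with coefficients in 'k are finitely supported functions on monomials
  (with the convolution product of HOL-Library.Poly_Mapping).\<close>
type_synonym monom = "nat set \<Rightarrow>\<^sub>0 nat"
type_synonym 'k mpoly = "monom \<Rightarrow>\<^sub>0 'k"

definition var :: "nat set \<Rightarrow> 'k::comm_ring_1 mpoly" where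
  "var S = Poly_Mapping.single (Poly_Mapping.single S 1) 1"

definition monom_deg :: "monom \<Rightarrow> nat" where
  "monom_deg m = (\<Sum>S\<in>Poly_Mapping.keys m. Poly_Mapping.lookup m S)"

definition pscale :: "'k::field \<Rightarrow> 'k mpoly \<Rightarrow> 'k mpoly" where
  "pscale c p = Poly_Mapping.map (\<lambda>a. c * a) p"

definition RG :: "nat \<Rightarrow> nat set set \<Rightarrow> ('k::field) mpoly set" where
  "RG d E = {p. \<forall>m\<in>Poly_Mapping.keys p. Poly_Mapping.keys m \<subseteq> stable_sets d E}"

definition RG_deg :: "nat \<Rightarrow> nat set set \<Rightarrow> nat \<Rightarrow> ('k::field) mpoly set" where
  "RG_deg d E k = {p \<in> RG d E. \<forall>m\<in>Poly_Mapping.keys p. monom_deg m = k}"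

definition J_gens :: "nat \<Rightarrow> nat set set \<Rightarrow> ('k::field) mpoly set" where
  "J_gens d E = {var S1 * var S2 - var S3 * var S4 | S1 S2 S3 S4.
      S1 \<in> stable_sets d E \<and> S2 \<in> stable_sets d E \<and> S3 \<in> stable_sets d E \<and> S4 \<in> stable_sets d E \<and>
      S1 \<inter> S2 = {} \<and> S3 \<inter> S4 = {} \<and> S1 \<union> S2 = S3 \<union> S4}"

definition M_gens :: "nat \<Rightarrow> nat set set \<Rightarrow> ('k::field) mpoly set" where
  "M_gens d E = {var S * var T | S T.
      S \<in> stable_sets d E \<and> T \<in> stable_sets d E \<and> S \<inter> T \<noteq> {}}"

definition ideal_gen_in :: "('k::field) mpoly set \<Rightarrow> 'k mpoly set \<Rightarrow> 'k mpoly set" where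
  "ideal_gen_in R B = {(\<Sum>g\<in>F. r g * g) | F r. finite F \<and> F \<subseteq> B \<and> (\<forall>g\<in>F. r g \<in> R)}"

definition K_G :: "nat \<Rightarrow> nat set set \<Rightarrow> ('k::field) mpoly set" where
  "K_G d E = ideal_gen_in (RG d E) (J_gens d E \<union> M_gens d E)"

text \<open>Hilbert function: dim_K (R[G]/K_G)_k = dim_K R[G]_k - dim_K (K_G \<inter> R[G]_k).
  (Both spaces are finite-dimensional; K_G is homogeneous.)  The type argument fixes
  the coefficient field K.\<close>
definition hilbert_fn :: "'k::field itself \<Rightarrow> nat \<Rightarrow> nat set set \<Rightarrow> nat \<Rightarrow> nat" where
  "hilbert_fn _ d E k =
     vector_space.dim (pscale :: 'k \<Rightarrow> _) (RG_deg d E k :: 'k mpoly set)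
     - vector_space.dim (pscale :: 'k \<Rightarrow> _) (K_G d E \<inter> RG_deg d E k :: 'k mpoly set)"

end

theory Submission
  imports Defs "HOL-Library.Indicator_Function"
begin

(* Grade the polynomial ring by vertex weights: x_S has weight the indicator vector of S.
  The binomials generating J_G are homogeneous for this grading and each generator of M_G
  has weight at least 2 at some vertex, so for every U the sum of the coefficients at
  monomials of weight indicator U is a linear functional vanishing on K_G.  Conversely, in
  degree k >= d every monomial either has weight at least 2 at some vertex, and then lies in
  K_G, or has weight the indicator of some U.  In the latter case the sizes of its k factors
  add up to |U| <= d <= k, so a factor x_S with |S| >= 2 forces a factor x_{}, and the exchanges
  x_{} x_S = x_{S - i} x_{i} reduce it modulo K_G to x_{}^(k - |U|) prod_{j in U} x_{j}.
  So these 2^d monomials form a basis of the degree-k part of R[G]/K_G. *)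

context vector_space
begin

lemma functional_eq_0_on_span:
  assumes add: "\<And>x y. f (x + y) = f x + f y" and scale: "\<And>a x. f (scale a x) = a * f x"
    and vanish: "\<And>x. x \<in> S \<Longrightarrow> f x = 0" and x: "x \<in> span S"
  shows "f x = 0"
  using x
proof (induction rule: span_induct_alt)
  case base
  show ?case using scale[of 0 0] by simp
next
  case (step a x y)
  then show ?case by (simp add: add scale vanish)
qed

lemma independent_Un_dual_family:
  fixes c :: "'i \<Rightarrow> 'b" and f :: "'i \<Rightarrow> 'b \<Rightarrow> 'a"
  assumes B: "independent B" and "finite I"
    and f_add: "\<And>i x y. f i (x + y) = f i x + f i y"
    and f_scale: "\<And>i a x. f i (scale a x) = a * f i x"
    and f_B: "\<And>i x. i \<in> I \<Longrightarrow> x \<in> B \<Longrightarrow> f i x = 0"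
    and f_c: "\<And>i j. i \<in> I \<Longrightarrow> j \<in> I \<Longrightarrow> f i (c j) = (if i = j then 1 else 0)"
  shows "independent (B \<union> c ` I)"
proof -
  have "independent (B \<union> c ` J)" if "finite J" "J \<subseteq> I" for J
    using that
  proof (induction J rule: finite_induct)
    case empty
    then show ?case using B by simp
  next
    case (insert i J)
    have "f i x = 0" if "x \<in> span (B \<union> c ` J)" for x
      using f_add f_scale _ that
    proof (rule functional_eq_0_on_span)
      show "f i y = 0" if "y \<in> B \<union> c ` J" for y
        using that insert f_B f_c by auto
    qed
    then have "c i \<notin> span (B \<union> c ` J)"
      using f_c[of i i] insert.prems by auto
    then have "independent (insert (c i) (B \<union> c ` J))"
      using insert by (intro independent_insertI) auto
    then show ?case
      by simp
  qed
  then show ?thesis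
    using \<open>finite I\<close> by blast
qed

lemma dim_eq_dim_add_card_if_dual_family:
  fixes c :: "'i \<Rightarrow> 'b" and f :: "'i \<Rightarrow> 'b \<Rightarrow> 'a"
  assumes fin: "finite B" "V \<subseteq> span B" "finite I"
    and W: "W \<subseteq> V" and c: "c ` I \<subseteq> V" and spanning: "V \<subseteq> span (W \<union> c ` I)"
    and f_add: "\<And>i x y. f i (x + y) = f i x + f i y"
    and f_scale: "\<And>i a x. f i (scale a x) = a * f i x"
    and f_W: "\<And>i x. i \<in> I \<Longrightarrow> x \<in> W \<Longrightarrow> f i x = 0"
    and f_c: "\<And>i j. i \<in> I \<Longrightarrow> j \<in> I \<Longrightarrow> f i (c j) = (if i = j then 1 else 0)"
  shows "dim V = dim W + card I"
proof -
  obtain BW where BW: "BW \<subseteq> W" "independent BW" "W \<subseteq> span BW" "card BW = dim W"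
    using basis_exists[of W] by blast
  have "finite BW"
    using independent_span_bound[OF fin(1) BW(2)] BW(1) W fin(2) by blast
  have indep: "independent (BW \<union> c ` I)"
    using BW(1) f_W f_c by (intro independent_Un_dual_family[OF BW(2) fin(3) f_add f_scale]) auto
  have "inj_on c I"
    by (rule inj_onI) (metis f_c zero_neq_one)
  moreover have "BW \<inter> c ` I = {}"
    using BW(1) f_W f_c by fastforce
  moreover have "span (BW \<union> c ` I) = span V"
  proof -
    have "W \<union> c ` I \<subseteq> span (BW \<union> c ` I)"
      using BW(3) span_mono[of BW "BW \<union> c ` I"] span_superset by blast
    then have "span (W \<union> c ` I) \<subseteq> span (BW \<union> c ` I)"
      using span_mono span_span by blast
    then show ?thesis
      unfolding span_eq using BW(1) W c spanning span_superset by blast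
  qed
  ultimately have "dim V = card BW + card I"
    using dim_eq_card[OF _ indep] \<open>finite BW\<close> fin(3)
    by (simp add: card_Un_disjoint card_image)
  then show ?thesis
    using BW(4) by simp
qed

end

lemma pscale_eq_mult: "pscale c p = Poly_Mapping.single 0 c * p"
  unfolding pscale_def by (rule mult_map_scale_conv_mult)

interpretation mpoly_space: vector_space "pscale :: 'k::field \<Rightarrow> 'k mpoly \<Rightarrow> 'k mpoly"
  by unfold_locales
    (simp_all add: pscale_eq_mult distrib_left distrib_right single_add mult.assoc[symmetric] mult_single)

lemma lookup_pscale [simp]: "Poly_Mapping.lookup (pscale c p) m = c * Poly_Mapping.lookup p m"
  unfolding pscale_def by (simp add: Poly_Mapping.map.rep_eq when_def)

lemma sum_keys_superset:
  fixes p :: "'a \<Rightarrow>\<^sub>0 'b::zero" and g :: "'a \<Rightarrow> 'b \<Rightarrow> 'c::comm_monoid_add"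
  assumes "finite A" "Poly_Mapping.keys p \<subseteq> A" "\<And>x. g x 0 = 0"
  shows "(\<Sum>x\<in>Poly_Mapping.keys p. g x (Poly_Mapping.lookup p x))
    = (\<Sum>x\<in>A. g x (Poly_Mapping.lookup p x))"
  by (rule sum.mono_neutral_left) (use assms in \<open>auto simp: in_keys_iff\<close>)

lemma sum_keys_add:
  fixes p q :: "'a \<Rightarrow>\<^sub>0 'b::monoid_add" and g :: "'a \<Rightarrow> 'b \<Rightarrow> 'c::comm_monoid_add"
  assumes "\<And>x. g x 0 = 0" "\<And>x a b. g x (a + b) = g x a + g x b"
  shows "(\<Sum>x\<in>Poly_Mapping.keys (p + q). g x (Poly_Mapping.lookup (p + q) x))
    = (\<Sum>x\<in>Poly_Mapping.keys p. g x (Poly_Mapping.lookup p x))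
      + (\<Sum>x\<in>Poly_Mapping.keys q. g x (Poly_Mapping.lookup q x))"
proof -
  let ?A = "Poly_Mapping.keys p \<union> Poly_Mapping.keys q"
  have A: "finite ?A" "Poly_Mapping.keys (p + q) \<subseteq> ?A"
    by (simp_all add: keys_add)
  have "(\<Sum>x\<in>Poly_Mapping.keys (p + q). g x (Poly_Mapping.lookup (p + q) x))
      = (\<Sum>x\<in>?A. g x (Poly_Mapping.lookup (p + q) x))"
    using A assms(1) by (rule sum_keys_superset)
  also have "\<dots> = (\<Sum>x\<in>?A. g x (Poly_Mapping.lookup p x)) + (\<Sum>x\<in>?A. g x (Poly_Mapping.lookup q x))"
    by (simp add: lookup_add assms(2) sum.distrib)
  also have "\<dots> = (\<Sum>x\<in>Poly_Mapping.keys p. g x (Poly_Mapping.lookup p x))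
      + (\<Sum>x\<in>Poly_Mapping.keys q. g x (Poly_Mapping.lookup q x))"
    using A(1) assms(1) by (simp add: sum_keys_superset[of ?A])
  finally show ?thesis .
qed

lemma poly_mapping_sum_single:
  "p = (\<Sum>m\<in>Poly_Mapping.keys p. Poly_Mapping.single m (Poly_Mapping.lookup p m))"
  by (rule poly_mapping_eqI) (simp add: lookup_sum lookup_single when_def in_keys_iff)

definition monom_sum :: "(nat set \<Rightarrow> nat) \<Rightarrow> monom \<Rightarrow> nat" where
  "monom_sum f m = (\<Sum>S\<in>Poly_Mapping.keys m. Poly_Mapping.lookup m S * f S)"

lemma monom_sum_add: "monom_sum f (a + b) = monom_sum f a + monom_sum f b"
  unfolding monom_sum_def by (rule sum_keys_add[where g = "\<lambda>S n. n * f S"]) (simp_all add: distrib_right)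

lemma monom_sum_zero [simp]: "monom_sum f 0 = 0"
  by (simp add: monom_sum_def)

lemma monom_sum_single [simp]: "monom_sum f (Poly_Mapping.single S n) = n * f S"
  by (cases "n = 0") (simp_all add: monom_sum_def)

lemma monom_sum_sum: "monom_sum f (sum g A) = (\<Sum>a\<in>A. monom_sum f (g a))"
  by (induction A rule: infinite_finite_induct) (simp_all add: monom_sum_add)

lemma monom_deg_eq_monom_sum: "monom_deg m = monom_sum (\<lambda>_. 1) m"
  by (simp add: monom_deg_def monom_sum_def)

definition vertex_weight :: "monom \<Rightarrow> nat \<Rightarrow> nat" where
  "vertex_weight m i = monom_sum (\<lambda>S. indicator S i) m"

lemma vertex_weight_add: "vertex_weight (a + b) i = vertex_weight a i + vertex_weight b i"
  by (simp add: vertex_weight_def monom_sum_add)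

lemma vertex_weight_single: "vertex_weight (Poly_Mapping.single S n) i = n * indicator S i"
  by (simp add: vertex_weight_def)

lemma vertex_weight_disjoint_pair:
  "S \<inter> T = {} \<Longrightarrow> vertex_weight (Poly_Mapping.single S 1 + Poly_Mapping.single T 1) = indicator (S \<union> T)"
  by (auto simp: fun_eq_iff vertex_weight_add vertex_weight_single indicator_def)

lemma indicator_eq_indicator_iff: "(indicator A :: 'a \<Rightarrow> 'b::zero_neq_one) = indicator B \<longleftrightarrow> A = B"
  by (auto simp: fun_eq_iff indicator_def)

lemma sum_vertex_weight:
  assumes "finite A" "\<And>S. S \<in> Poly_Mapping.keys m \<Longrightarrow> S \<subseteq> A"
  shows "(\<Sum>i\<in>A. vertex_weight m i) = monom_sum card m"
proof -
  have "(\<Sum>i\<in>A. vertex_weight m i)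
      = (\<Sum>S\<in>Poly_Mapping.keys m. \<Sum>i\<in>A. Poly_Mapping.lookup m S * indicator S i)"
    unfolding vertex_weight_def monom_sum_def by (rule sum.swap)
  also have "\<dots> = (\<Sum>S\<in>Poly_Mapping.keys m. Poly_Mapping.lookup m S * card S)"
  proof (rule sum.cong)
    fix S assume "S \<in> Poly_Mapping.keys m"
    then have "A \<inter> S = S" using assms(2) by blast
    then show "(\<Sum>i\<in>A. Poly_Mapping.lookup m S * indicator S i) = Poly_Mapping.lookup m S * card S"
      using assms(1) by (simp add: sum_distrib_left[symmetric] indicator_def sum.If_cases)
  qed simp
  finally show ?thesis
    unfolding monom_sum_def .
qed

definition monomial :: "monom \<Rightarrow> 'k::comm_ring_1 mpoly" where
  "monomial m = Poly_Mapping.single m 1"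

lemma keys_monomial [simp]: "Poly_Mapping.keys (monomial m) = {m}"
  by (simp add: monomial_def)

lemma monomial_add: "monomial (a + b) = monomial a * monomial b"
  by (simp add: monomial_def mult_single)

lemma var_mult_var: "var S * var T = monomial (Poly_Mapping.single S 1 + Poly_Mapping.single T 1)"
  by (simp add: var_def monomial_def mult_single)

definition weight_coeff :: "(nat \<Rightarrow> nat) \<Rightarrow> 'k::comm_ring_1 mpoly \<Rightarrow> 'k" where
  "weight_coeff w p = (\<Sum>m\<in>Poly_Mapping.keys p. if vertex_weight m = w then Poly_Mapping.lookup p m else 0)"

lemma weight_coeff_zero [simp]: "weight_coeff w 0 = 0"
  by (simp add: weight_coeff_def)

lemma weight_coeff_add: "weight_coeff w (p + q) = weight_coeff w p + weight_coeff w q"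
  unfolding weight_coeff_def
  by (rule sum_keys_add[where g = "\<lambda>m c. if vertex_weight m = w then c else 0"]) simp_all

lemma weight_coeff_diff: "weight_coeff w (p - q) = weight_coeff w p - weight_coeff w q"
  using weight_coeff_add[of w "p - q" q] by simp

lemma weight_coeff_sum: "weight_coeff w (sum g A) = (\<Sum>a\<in>A. weight_coeff w (g a))"
  by (induction A rule: infinite_finite_induct) (simp_all add: weight_coeff_add)

lemma weight_coeff_single:
  "weight_coeff w (Poly_Mapping.single m c) = (if vertex_weight m = w then c else 0)"
  by (cases "c = 0") (simp_all add: weight_coeff_def)

lemma weight_coeff_pscale: "weight_coeff w (pscale c p) = c * weight_coeff w p"
proof -
  have "Poly_Mapping.keys (pscale c p) \<subseteq> Poly_Mapping.keys p"
    by (auto simp: in_keys_iff)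
  then have "weight_coeff w (pscale c p)
      = (\<Sum>m\<in>Poly_Mapping.keys p. if vertex_weight m = w then Poly_Mapping.lookup (pscale c p) m else 0)"
    unfolding weight_coeff_def by (intro sum_keys_superset) simp_all
  then show ?thesis
    by (simp add: weight_coeff_def sum_distrib_left if_distrib cong: if_cong)
qed

lemma weight_coeff_mult_monomial:
  "weight_coeff w (r * monomial a)
    = (\<Sum>n\<in>Poly_Mapping.keys r. if vertex_weight (n + a) = w then Poly_Mapping.lookup r n else 0)"
proof -
  have "r * monomial a = (\<Sum>n\<in>Poly_Mapping.keys r. Poly_Mapping.single (n + a) (Poly_Mapping.lookup r n))"
    by (subst poly_mapping_sum_single[of r]) (simp add: sum_distrib_right monomial_def mult_single)
  then show ?thesis
    by (simp add: weight_coeff_sum weight_coeff_single)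
qed

lemma weight_coeff_mult_binomial:
  assumes "vertex_weight a = vertex_weight b"
  shows "weight_coeff w (r * (monomial a - monomial b)) = 0"
proof -
  have "vertex_weight (n + a) = vertex_weight (n + b)" for n
    using assms by (simp add: fun_eq_iff vertex_weight_add)
  then show ?thesis
    by (simp add: right_diff_distrib weight_coeff_diff weight_coeff_mult_monomial)
qed

lemma weight_coeff_mult_monomial_eq_0:
  assumes "w i < vertex_weight a i"
  shows "weight_coeff w (r * monomial a) = 0"
proof -
  have "vertex_weight (n + a) \<noteq> w" for n
    using assms vertex_weight_add[of n a i] by auto
  then show ?thesis
    by (simp add: weight_coeff_mult_monomial)
qed

lemma weight_coeff_K_G:
  assumes "p \<in> K_G d E" and w: "\<And>i. w i \<le> 1"
  shows "weight_coeff w p = 0"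
proof -
  obtain F r where p: "p = (\<Sum>g\<in>F. r g * g)" and F: "F \<subseteq> J_gens d E \<union> M_gens d E"
    using assms unfolding K_G_def ideal_gen_in_def by blast
  have "weight_coeff w (r g * g) = 0" if "g \<in> J_gens d E" for g
  proof -
    obtain S1 S2 S3 S4 where g: "g = var S1 * var S2 - var S3 * var S4"
      and "S1 \<inter> S2 = {}" "S3 \<inter> S4 = {}" "S1 \<union> S2 = S3 \<union> S4"
      using \<open>g \<in> J_gens d E\<close> unfolding J_gens_def by blast
    then show ?thesis
      unfolding g var_mult_var
      by (intro weight_coeff_mult_binomial) (metis vertex_weight_disjoint_pair)
  qed
  moreover have "weight_coeff w (r g * g) = 0" if "g \<in> M_gens d E" for g
  proof -
    obtain S T i where g: "g = var S * var T" and "i \<in> S" "i \<in> T"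
      using \<open>g \<in> M_gens d E\<close> unfolding M_gens_def by blast
    then have "w i < vertex_weight (Poly_Mapping.single S 1 + Poly_Mapping.single T 1) i"
      using w[of i] by (simp add: vertex_weight_add vertex_weight_single)
    then show ?thesis
      unfolding g var_mult_var by (rule weight_coeff_mult_monomial_eq_0)
  qed
  ultimately show ?thesis
    using F by (auto simp: p weight_coeff_sum intro: sum.neutral)
qed

lemma stable_sets_subset: "S \<in> stable_sets d E \<Longrightarrow> S \<subseteq> {1..d}"
  by (simp add: stable_sets_def)

lemma finite_stable_set: "S \<in> stable_sets d E \<Longrightarrow> finite S"
  by (meson finite_atLeastAtMost finite_subset stable_sets_subset)

lemma finite_stable_sets: "finite (stable_sets d E)"
  by (rule finite_subset[of _ "Pow {1..d}"]) (auto simp: stable_sets_def)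

lemma stable_sets_downward_closed: "S \<in> stable_sets d E \<Longrightarrow> T \<subseteq> S \<Longrightarrow> T \<in> stable_sets d E"
  unfolding stable_sets_def by blast

lemma empty_in_stable_sets: "simple_graph d E \<Longrightarrow> {} \<in> stable_sets d E"
  unfolding stable_sets_def simple_graph_def by force

lemma singleton_in_stable_sets:
  assumes "simple_graph d E" "i \<in> {1..d}"
  shows "{i} \<in> stable_sets d E"
proof -
  have "\<not> e \<subseteq> {i}" if "e \<in> E" for e
    using assms(1) that card_mono[of "{i}" e] unfolding simple_graph_def by force
  with assms(2) show ?thesis
    unfolding stable_sets_def by auto
qed

definition stable_monoms :: "nat \<Rightarrow> nat set set \<Rightarrow> nat \<Rightarrow> monom set" where
  "stable_monoms d E k = {m. Poly_Mapping.keys m \<subseteq> stable_sets d E \<and> monom_deg m = k}"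

lemma lookup_le_monom_deg: "Poly_Mapping.lookup m S \<le> monom_deg m"
  by (cases "S \<in> Poly_Mapping.keys m")
    (auto simp: monom_deg_def in_keys_iff intro: member_le_sum)

lemma finite_stable_monoms: "finite (stable_monoms d E k)"
proof -
  have "Poly_Mapping.lookup ` stable_monoms d E k
      \<subseteq> {f. \<forall>S. (S \<in> stable_sets d E \<longrightarrow> f S \<in> {0..k}) \<and> (S \<notin> stable_sets d E \<longrightarrow> f S = 0)}"
    using lookup_le_monom_deg by (fastforce simp: stable_monoms_def in_keys_iff)
  then have "finite (Poly_Mapping.lookup ` stable_monoms d E k)"
    by (rule finite_subset) (intro finite_set_of_finite_funs finite_stable_sets finite_atLeastAtMost)
  then show ?thesis
    by (rule finite_imageD) (metis inj_onI lookup_inject)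
qed

lemma monomial_in_RG_deg: "m \<in> stable_monoms d E k \<Longrightarrow> monomial m \<in> RG_deg d E k"
  by (simp add: stable_monoms_def RG_deg_def RG_def)

lemma monomial_diff_in_RG_deg:
  "m \<in> stable_monoms d E k \<Longrightarrow> m' \<in> stable_monoms d E k \<Longrightarrow> monomial m - monomial m' \<in> RG_deg d E k"
  using keys_diff[of "monomial m" "monomial m'"] by (fastforce simp: stable_monoms_def RG_deg_def RG_def)

lemma RG_deg_subset_span_monomials:
  "RG_deg d E k \<subseteq> mpoly_space.span (monomial ` stable_monoms d E k :: 'k::field mpoly set)"
proof
  fix p :: "'k mpoly"
  assume p: "p \<in> RG_deg d E k"
  have "p = (\<Sum>m\<in>Poly_Mapping.keys p. pscale (Poly_Mapping.lookup p m) (monomial m))"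
    by (subst poly_mapping_sum_single) (simp add: pscale_def monomial_def)
  also have "\<dots> \<in> mpoly_space.span (monomial ` stable_monoms d E k)"
    using p by (intro mpoly_space.span_sum mpoly_space.span_scale mpoly_space.span_base)
      (auto simp: RG_deg_def RG_def stable_monoms_def)
  finally show "p \<in> mpoly_space.span (monomial ` stable_monoms d E k)" .
qed

lemma monomial_mult_in_K_G:
  assumes "Poly_Mapping.keys a \<subseteq> stable_sets d E" "g \<in> J_gens d E \<union> M_gens d E"
  shows "monomial a * g \<in> K_G d E"
  unfolding K_G_def ideal_gen_in_def
  using assms by (auto intro!: exI[of _ "{g}"] exI[of _ "\<lambda>_. monomial a"] simp: RG_def)

lemma monom_factor_out:
  fixes m :: monom
  assumes "S \<in> Poly_Mapping.keys m"
  obtains a where "m = a + Poly_Mapping.single S 1" "Poly_Mapping.keys a \<subseteq> Poly_Mapping.keys m"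
proof
  show "m = (m - Poly_Mapping.single S 1) + Poly_Mapping.single S 1"
    using assms by (intro poly_mapping_eqI) (auto simp: lookup_add lookup_minus lookup_single when_def in_keys_iff)
  show "Poly_Mapping.keys (m - Poly_Mapping.single S 1) \<subseteq> Poly_Mapping.keys m"
    by (auto simp: in_keys_iff lookup_minus)
qed

lemma monom_factor_out_pair:
  fixes m :: monom
  assumes "S \<in> Poly_Mapping.keys m" "T \<in> Poly_Mapping.keys m" "S \<noteq> T"
  obtains a where "m = a + (Poly_Mapping.single S 1 + Poly_Mapping.single T 1)"
    "Poly_Mapping.keys a \<subseteq> Poly_Mapping.keys m"
proof -
  obtain b where b: "m = b + Poly_Mapping.single T 1" "Poly_Mapping.keys b \<subseteq> Poly_Mapping.keys m"
    using monom_factor_out[OF assms(2)] .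
  have "S \<in> Poly_Mapping.keys b"
    using assms(1,3) by (simp add: b(1) in_keys_iff lookup_add lookup_single when_def)
  then obtain a where "b = a + Poly_Mapping.single S 1" "Poly_Mapping.keys a \<subseteq> Poly_Mapping.keys b"
    by (rule monom_factor_out)
  with b that show ?thesis
    by (simp add: add.assoc)
qed

lemma vertex_weight_pos_imp_key:
  assumes "0 < vertex_weight m i"
  obtains S where "S \<in> Poly_Mapping.keys m" "i \<in> S"
  using assms sum.neutral[of "Poly_Mapping.keys m" "\<lambda>S. Poly_Mapping.lookup m S * indicator S i"]
  unfolding vertex_weight_def monom_sum_def by fastforce

lemma monomial_in_K_G_if_vertex_weight_ge_2:
  assumes m: "Poly_Mapping.keys m \<subseteq> stable_sets d E" and i: "2 \<le> vertex_weight m i"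
  shows "monomial m \<in> K_G d E"
proof -
  obtain S where S: "S \<in> Poly_Mapping.keys m" "i \<in> S"
    using i vertex_weight_pos_imp_key by (metis less_le_trans pos2)
  obtain a where a: "m = a + Poly_Mapping.single S 1" "Poly_Mapping.keys a \<subseteq> Poly_Mapping.keys m"
    using monom_factor_out[OF S(1)] .
  have "0 < vertex_weight a i"
    using i S(2) by (simp add: a(1) vertex_weight_add vertex_weight_single)
  then obtain T where T: "T \<in> Poly_Mapping.keys a" "i \<in> T"
    by (rule vertex_weight_pos_imp_key)
  obtain b where b: "a = b + Poly_Mapping.single T 1" "Poly_Mapping.keys b \<subseteq> Poly_Mapping.keys a"
    using monom_factor_out[OF T(1)] .
  have "monomial m = monomial b * (var T * var S)"
    by (simp add: a(1) b(1) var_mult_var monomial_add mult.assoc)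
  moreover have "var T * var S \<in> M_gens d E"
    using S T a(2) m unfolding M_gens_def by blast
  ultimately show ?thesis
    using monomial_mult_in_K_G a(2) b(2) m by (metis UnI2 subset_trans)
qed

definition std_monom :: "nat \<Rightarrow> nat set \<Rightarrow> monom" where
  "std_monom k U = Poly_Mapping.single {} (k - card U) + (\<Sum>j\<in>U. Poly_Mapping.single {j} 1)"

lemma vertex_weight_std_monom: "finite U \<Longrightarrow> vertex_weight (std_monom k U) = indicator U"
  by (auto simp: fun_eq_iff std_monom_def vertex_weight_def monom_sum_add monom_sum_sum
      indicator_def sum.If_cases)

lemma monom_deg_std_monom: "finite U \<Longrightarrow> card U \<le> k \<Longrightarrow> monom_deg (std_monom k U) = k"
  unfolding std_monom_def monom_deg_eq_monom_sum by (simp add: monom_sum_add monom_sum_sum)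

lemma lookup_singletons_sum:
  "Poly_Mapping.lookup (\<Sum>j\<in>U. Poly_Mapping.single {j} (1::nat)) T = (\<Sum>j\<in>U. if T = {j} then 1 else 0)"
  unfolding lookup_sum by (rule sum.cong) (auto simp: lookup_single when_def)

lemma std_monom_in_stable_monoms:
  assumes G: "simple_graph d E" and U: "U \<subseteq> {1..d}" and "d \<le> k"
  shows "std_monom k U \<in> stable_monoms d E k"
proof -
  have "finite U" "card U \<le> k"
    using U card_mono[OF _ U] \<open>d \<le> k\<close> by (auto intro: finite_subset)
  moreover have "Poly_Mapping.keys (std_monom k U) \<subseteq> insert {} ((\<lambda>j. {j}) ` U)"
  proof
    fix T
    assume "T \<in> Poly_Mapping.keys (std_monom k U)"
    moreover have "Poly_Mapping.lookup (std_monom k U) T = 0" if "T \<notin> insert {} ((\<lambda>j. {j}) ` U)"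
      using that unfolding std_monom_def lookup_add lookup_singletons_sum
      by (auto simp: lookup_single when_def split: if_splits intro!: sum.neutral)
    ultimately show "T \<in> insert {} ((\<lambda>j. {j}) ` U)"
      by (auto simp: in_keys_iff)
  qed
  moreover have "insert {} ((\<lambda>j. {j}) ` U) \<subseteq> stable_sets d E"
    using empty_in_stable_sets[OF G] singleton_in_stable_sets[OF G] U by blast
  ultimately show ?thesis
    unfolding stable_monoms_def using monom_deg_std_monom by blast
qed

lemma card_le_1_cases: "finite T \<Longrightarrow> card T \<le> 1 \<Longrightarrow> T = {} \<or> (\<exists>j. T = {j})"
  by (cases "card T") (auto simp: card_1_singleton_iff)

lemma eq_std_monom_if_small_factors:
  assumes m: "m \<in> stable_monoms d E k" and w: "vertex_weight m = indicator U" and U: "U \<subseteq> {1..d}"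
    and small: "\<And>T. T \<in> Poly_Mapping.keys m \<Longrightarrow> card T \<le> 1"
  shows "m = std_monom k U"
proof -
  have "finite U"
    using U finite_subset by blast
  have shape: "T = {} \<or> (\<exists>j. T = {j})" if "T \<in> Poly_Mapping.keys m" for T
    using that small m by (intro card_le_1_cases) (auto simp: stable_monoms_def intro: finite_stable_set)
  have lookup_singleton: "Poly_Mapping.lookup m {j} = indicator U j" for j
  proof -
    have "indicator U j = (\<Sum>T\<in>Poly_Mapping.keys m. Poly_Mapping.lookup m T * indicator T j)"
      using w by (simp add: vertex_weight_def monom_sum_def fun_eq_iff)
    also have "\<dots> = (\<Sum>T\<in>Poly_Mapping.keys m. if T = {j} then Poly_Mapping.lookup m T else 0)"
      by (rule sum.cong) (auto simp: indicator_def dest!: shape)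
    also have "\<dots> = Poly_Mapping.lookup m {j}"
      by (simp add: in_keys_iff)
    finally show ?thesis ..
  qed
  have "m = std_monom (Poly_Mapping.lookup m {} + card U) U"
  proof (rule poly_mapping_eqI)
    fix T
    consider "T = {}" | j where "T = {j}" | "T \<notin> Poly_Mapping.keys m" "T \<noteq> {}" "\<forall>j. T \<noteq> {j}"
      using shape by blast
    then show "Poly_Mapping.lookup m T = Poly_Mapping.lookup (std_monom (Poly_Mapping.lookup m {} + card U) U) T"
      unfolding std_monom_def lookup_add lookup_singletons_sum
      by cases (auto simp: lookup_single lookup_singleton \<open>finite U\<close> in_keys_iff intro!: sum.neutral)
  qed
  moreover have "Poly_Mapping.lookup m {} + card U = k"
    using m monom_deg_std_monom[OF \<open>finite U\<close>, of "Poly_Mapping.lookup m {} + card U"]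
    by (simp add: stable_monoms_def flip: \<open>m = std_monom _ U\<close>)
  ultimately show ?thesis
    by simp
qed

lemma empty_in_keys_if_large_factor:
  assumes "d \<le> k" and m: "m \<in> stable_monoms d E k" and w: "vertex_weight m = indicator U"
    and U: "U \<subseteq> {1..d}" and S: "S \<in> Poly_Mapping.keys m" "2 \<le> card S"
  shows "{} \<in> Poly_Mapping.keys m"
proof (rule ccontr)
  assume no_empty: "{} \<notin> Poly_Mapping.keys m"
  have keys: "Poly_Mapping.keys m \<subseteq> stable_sets d E"
    using m by (simp add: stable_monoms_def)
  have "k = monom_sum (\<lambda>_. 1) m"
    using m by (simp add: stable_monoms_def monom_deg_eq_monom_sum)
  also have "\<dots> < monom_sum card m"
    unfolding monom_sum_def
  proof (rule sum_strict_mono_ex1)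
    show "\<forall>T\<in>Poly_Mapping.keys m. Poly_Mapping.lookup m T * 1 \<le> Poly_Mapping.lookup m T * card T"
      using no_empty keys finite_stable_set by (fastforce simp: Suc_le_eq card_gt_0_iff)
    show "\<exists>T\<in>Poly_Mapping.keys m. Poly_Mapping.lookup m T * 1 < Poly_Mapping.lookup m T * card T"
      using S by (auto simp: in_keys_iff intro!: bexI[of _ S])
  qed simp
  also have "\<dots> = (\<Sum>i\<in>{1..d}. vertex_weight m i)"
    using keys stable_sets_subset by (intro sum_vertex_weight[symmetric]) (simp, blast)
  also have "\<dots> = card U"
    using U by (simp add: w sum_indicator_eq_card Int_absorb1)
  also have "\<dots> \<le> d"
    using card_mono[OF _ U] by simp
  finally show False
    using \<open>d \<le> k\<close> by simp
qed

lemma exchange_step: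
  fixes m :: monom
  assumes G: "simple_graph d E" and m: "m \<in> stable_monoms d E k"
    and S: "S \<in> Poly_Mapping.keys m" "2 \<le> card S" and empty: "{} \<in> Poly_Mapping.keys m"
  obtains m' where "m' \<in> stable_monoms d E k" "vertex_weight m' = vertex_weight m"
    "Poly_Mapping.lookup m' {} < Poly_Mapping.lookup m {}"
    "monomial m - monomial m' \<in> K_G d E \<inter> RG_deg d E k"
proof -
  have keys: "Poly_Mapping.keys m \<subseteq> stable_sets d E"
    using m by (simp add: stable_monoms_def)
  have "S \<in> stable_sets d E"
    using S(1) keys by blast
  obtain i where i: "i \<in> S"
    using S(2) by fastforce
  have "S - {i} \<noteq> {}"
  proof
    assume "S - {i} = {}"
    then have "card S \<le> card {i}"
      by (intro card_mono) auto
    with S(2) show False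
      by simp
  qed
  have "S \<noteq> {}"
    using i by blast
  then obtain a where m_eq: "m = a + (Poly_Mapping.single {} 1 + Poly_Mapping.single S 1)"
    and a: "Poly_Mapping.keys a \<subseteq> Poly_Mapping.keys m"
    using monom_factor_out_pair[OF empty S(1)] by metis
  define m' where "m' = a + (Poly_Mapping.single (S - {i}) 1 + Poly_Mapping.single {i} 1)"
  have stable: "S - {i} \<in> stable_sets d E" "{i} \<in> stable_sets d E" "{} \<in> stable_sets d E"
    using \<open>S \<in> stable_sets d E\<close> i stable_sets_downward_closed by blast+
  have "Poly_Mapping.keys m' \<subseteq> Poly_Mapping.keys a \<union> {S - {i}, {i}}"
    by (auto simp: m'_def in_keys_iff lookup_add lookup_single when_def split: if_splits)
  then have "Poly_Mapping.keys m' \<subseteq> stable_sets d E"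
    using stable a keys by blast
  moreover have "monom_deg m' = k"
    using m by (simp add: m'_def stable_monoms_def monom_deg_eq_monom_sum monom_sum_add m_eq)
  ultimately have m': "m' \<in> stable_monoms d E k"
    by (simp add: stable_monoms_def)
  moreover have "vertex_weight m' = vertex_weight m"
    using i by (auto simp: fun_eq_iff m'_def m_eq vertex_weight_add vertex_weight_single indicator_def)
  moreover have "Poly_Mapping.lookup m' {} < Poly_Mapping.lookup m {}"
    using \<open>S - {i} \<noteq> {}\<close> i by (auto simp: m'_def m_eq lookup_add lookup_single)
  moreover have "monomial m - monomial m' \<in> K_G d E"
  proof -
    have "monomial m - monomial m' = monomial a * (var {} * var S - var (S - {i}) * var {i})"
      by (simp add: m_eq m'_def var_mult_var monomial_add right_diff_distrib)
    moreover have "var {} * var S - var (S - {i}) * var {i} \<in> J_gens d E"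
      unfolding J_gens_def using stable \<open>S \<in> stable_sets d E\<close> i by blast
    ultimately show ?thesis
      using monomial_mult_in_K_G a keys by (metis UnI1 subset_trans)
  qed
  ultimately show ?thesis
    using that m monomial_diff_in_RG_deg by blast
qed

lemma monomial_reduces_to_std_monom:
  assumes G: "simple_graph d E" and "d \<le> k" and U: "U \<subseteq> {1..d}"
    and "m \<in> stable_monoms d E k" "vertex_weight m = indicator U"
  shows "monomial m - monomial (std_monom k U) \<in> mpoly_space.span (K_G d E \<inter> RG_deg d E k :: 'k::field mpoly set)"
  using assms(4,5)
proof (induction "Poly_Mapping.lookup m {}" arbitrary: m rule: less_induct)
  case less
  show ?case
  proof (cases "\<forall>T\<in>Poly_Mapping.keys m. card T \<le> 1")
    case True
    then have "m = std_monom k U"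
      using eq_std_monom_if_small_factors less.prems U by blast
    then show ?thesis
      by (simp add: mpoly_space.span_zero)
  next
    case False
    then obtain S where S: "S \<in> Poly_Mapping.keys m" "2 \<le> card S"
      by force
    then have "{} \<in> Poly_Mapping.keys m"
      using empty_in_keys_if_large_factor \<open>d \<le> k\<close> less.prems U by blast
    then obtain m' where m': "m' \<in> stable_monoms d E k" "vertex_weight m' = vertex_weight m"
      "Poly_Mapping.lookup m' {} < Poly_Mapping.lookup m {}"
      "monomial m - monomial m' \<in> (K_G d E \<inter> RG_deg d E k :: 'k mpoly set)"
      using exchange_step[OF G less.prems(1) S] by blast
    have "monomial m - monomial (std_monom k U)
        = (monomial m - monomial m') + (monomial m' - monomial (std_monom k U) :: 'k mpoly)"
      by simp
    also have "\<dots> \<in> mpoly_space.span (K_G d E \<inter> RG_deg d E k)"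
    proof (rule mpoly_space.span_add)
      show "monomial m - monomial m' \<in> mpoly_space.span (K_G d E \<inter> RG_deg d E k :: 'k mpoly set)"
        using m'(4) by (rule mpoly_space.span_base)
      show "monomial m' - monomial (std_monom k U) \<in> mpoly_space.span (K_G d E \<inter> RG_deg d E k :: 'k mpoly set)"
        using m' less.hyps less.prems(2) by simp
    qed
    finally show ?thesis .
  qed
qed

lemma RG_deg_subset_span_std_monoms:
  assumes G: "simple_graph d E" and "d \<le> k"
  shows "RG_deg d E k \<subseteq> mpoly_space.span
    (K_G d E \<inter> RG_deg d E k \<union> (\<lambda>U. monomial (std_monom k U)) ` Pow {1..d} :: 'k::field mpoly set)"
    (is "_ \<subseteq> mpoly_space.span ?B")
proof -
  have "monomial m \<in> mpoly_space.span ?B" if m: "m \<in> stable_monoms d E k" for m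
  proof (cases "\<exists>i. 2 \<le> vertex_weight m i")
    case True
    then obtain i where "2 \<le> vertex_weight m i"
      by blast
    then have "(monomial m :: 'k mpoly) \<in> K_G d E"
      using m by (intro monomial_in_K_G_if_vertex_weight_ge_2) (simp_all add: stable_monoms_def)
    moreover have "(monomial m :: 'k mpoly) \<in> RG_deg d E k"
      using m by (rule monomial_in_RG_deg)
    ultimately show ?thesis
      by (intro mpoly_space.span_base) simp
  next
    case False
    define U where "U = {i. vertex_weight m i = 1}"
    have w: "vertex_weight m = indicator U"
    proof
      fix i
      have "vertex_weight m i < 2"
        using False by (simp add: not_le)
      then show "vertex_weight m i = indicator U i"
        by (auto simp: U_def indicator_def)
    qed
    have U: "U \<subseteq> {1..d}"
    proof
      fix i
      assume "i \<in> U"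
      then have "0 < vertex_weight m i"
        by (simp add: U_def)
      then obtain S where "S \<in> Poly_Mapping.keys m" "i \<in> S"
        by (rule vertex_weight_pos_imp_key)
      then show "i \<in> {1..d}"
        using m stable_sets_subset unfolding stable_monoms_def by blast
    qed
    have "monomial m = (monomial m - monomial (std_monom k U)) + monomial (std_monom k U)"
      by simp
    also have "\<dots> \<in> mpoly_space.span ?B"
    proof (rule mpoly_space.span_add)
      show "monomial m - monomial (std_monom k U) \<in> mpoly_space.span ?B"
        using monomial_reduces_to_std_monom[OF G \<open>d \<le> k\<close> U m w] mpoly_space.span_mono[of _ ?B]
        by blast
      show "monomial (std_monom k U) \<in> mpoly_space.span ?B"
        using U by (intro mpoly_space.span_base) blast
    qed
    finally show ?thesis .
  qed
  then have "mpoly_space.span (monomial ` stable_monoms d E k) \<subseteq> mpoly_space.span ?B"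
    by (intro mpoly_space.span_minimal mpoly_space.subspace_span image_subsetI)
  then show ?thesis
    by (rule subset_trans[OF RG_deg_subset_span_monomials])
qed

theorem proposition6p11:
  fixes d :: nat and E :: "nat set set"
  assumes "simple_graph d E"
  shows "\<exists>k0. \<forall>k\<ge>k0. hilbert_fn TYPE('k::field) d E k = 2 ^ d"
proof (intro exI allI impI)
  fix k
  assume "d \<le> k"
  have "mpoly_space.dim (RG_deg d E k :: 'k mpoly set)
      = mpoly_space.dim (K_G d E \<inter> RG_deg d E k :: 'k mpoly set) + card (Pow {1..d})"
  proof (rule mpoly_space.dim_eq_dim_add_card_if_dual_family
      [where c = "\<lambda>U. monomial (std_monom k U)" and f = "\<lambda>U. weight_coeff (indicator U)"])
    show "finite (monomial ` stable_monoms d E k)"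
      by (simp add: finite_stable_monoms)
    show "(\<lambda>U. monomial (std_monom k U)) ` Pow {1..d} \<subseteq> RG_deg d E k"
      using std_monom_in_stable_monoms[OF assms _ \<open>d \<le> k\<close>] monomial_in_RG_deg by blast
    show "weight_coeff (indicator U) (monomial (std_monom k U')) = (if U = U' then 1 else 0)"
      if "U \<in> Pow {1..d}" "U' \<in> Pow {1..d}" for U U'
      using that finite_subset[of U' "{1..d}"]
      by (auto simp: monomial_def weight_coeff_single vertex_weight_std_monom indicator_eq_indicator_iff)
    show "weight_coeff (indicator U) p = 0" if "p \<in> K_G d E \<inter> RG_deg d E k" for U p
      using that by (intro weight_coeff_K_G) (auto simp: indicator_def)
  qed (use RG_deg_subset_span_monomials RG_deg_subset_span_std_monoms[OF assms \<open>d \<le> k\<close>]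
      weight_coeff_add weight_coeff_pscale in auto)
  then show "hilbert_fn TYPE('k) d E k = 2 ^ d"
    by (simp add: hilbert_fn_def card_Pow)
qed

end
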